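(* For integers $n,r\ge0$, $$\frac{1}{r!\,n!}\int_{E_2}\left(\log\frac{1-t_1}{1-t_2}\right)^r\left(\log\frac{1}{1-t_1}-\log\frac{t_2}{t_1}\right)^n\frac{dt_1\,dt_2}{(1-t_1)t_2}=\begin{cases}\zeta^\star(r+2,\{2\}^m),& n=2m,\\ 0,& n=2m+1.\end{cases}$$
   Context: $E_2=\{(t_1,t_2)\in\mathbb{R}^2:0<t_1<t_2<1\}$. $\zeta^\star(\alpha_1,\ldots,\alpha_s)=\sum_{1\le k_1\le\cdots\le k_s}k_1^{-\alpha_1}\cdots k_s^{-\alpha_s}$; $(r+2,\{2\}^m)$ denotes $r+2$ followed by $m$ copies of $2$. *)

theory Defs
  imports "HOL-Analysis.Analysis"
begin

definition E2 :: "(real \<times> real) set" where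
  "E2 = {(t1, t2). 0 < t1 \<and> t1 < t2 \<and> t2 < 1}"

definition zeta_star :: "nat list \<Rightarrow> real" where
  "zeta_star as =
     infsum (\<lambda>ks. \<Prod>i<length as. inverse (real (ks ! i) ^ (as ! i)))
       {ks. length ks = length as \<and> sorted ks \<and> (\<forall>k\<in>set ks. 1 \<le> k)}"

definition integrand3p2 :: "nat \<Rightarrow> nat \<Rightarrow> real \<times> real \<Rightarrow> real" where
  "integrand3p2 r n t = (case t of (t1, t2) \<Rightarrow>
     (ln ((1 - t1) / (1 - t2))) ^ r * (ln (1 / (1 - t1)) - ln (t2 / t1)) ^ n
       / ((1 - t1) * t2))"

end

theory Submission
  imports Defs "HOL-Real_Asymp.Real_Asymp"
begin

text \<open>
  Weighting the \<open>n\<close>-th integral by \<open>y\<^sup>n / n!\<close> and summing turns the integrand into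
  \<open>log((1 - t1)/(1 - t2))\<^sup>r t1\<^sup>y (1 - t1)\<^sup>-\<^sup>y\<^sup>-\<^sup>1 t2\<^sup>-\<^sup>y\<^sup>-\<^sup>1\<close>.
  Expanding \<open>t2\<^sup>-\<^sup>y\<^sup>-\<^sup>1\<close> binomially in powers of \<open>1 - t2\<close>, integrating over \<open>t2\<close>
  (the \<open>k\<close>-th term gives \<open>r! (1 - t1)\<^sup>k\<^sup>+\<^sup>1 / (k + 1)\<^sup>r\<^sup>+\<^sup>1\<close>) and then over \<open>t1\<close>
  (a Beta integral) yields \<open>r! \<Sum>k. \<Gamma>(k + 1 + y) \<Gamma>(k + 1 - y) / (k!\<^sup>2 (k + 1)\<^sup>r\<^sup>+\<^sup>2)\<close>.
  The Gamma quotient is \<open>\<Prod>j>k. (1 - y\<^sup>2/j\<^sup>2)\<^sup>-\<^sup>1\<close>, the generating function in \<open>y\<^sup>2\<close> of the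
  zeta-star values of twos with all indices above \<open>k\<close>; hence the whole sum is
  \<open>r! \<Sum>m. \<zeta>\<^sup>\<star>(r + 2, {2}\<^sup>m) y\<^sup>2\<^sup>m\<close>, and comparing coefficients of \<open>y\<^sup>n\<close> proves the theorem.
  The exchanges of sums and integrals are justified by domination by the integrands at \<open>\<plusminus>y\<close>.
\<close>

lemma has_sum_Sigma_nonneg_sums:
  fixes f :: "nat \<times> 'b \<Rightarrow> real"
  assumes inner: "\<And>i. ((\<lambda>y. f (i, y)) has_sum g i) (B i)"
    and outer: "g sums S"
    and nonneg: "\<And>i y. y \<in> B i \<Longrightarrow> 0 \<le> f (i, y)"
  shows "(f has_sum S) (Sigma UNIV B)"
proof -
  have "0 \<le> g i" for i
    by (rule has_sum_nonneg[OF inner]) (use nonneg in auto)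
  then have gS: "(g has_sum S) UNIV"
    by (rule sums_nonneg_imp_has_sum[OF outer])
  have "f summable_on Sigma UNIV B"
    by (rule summable_on_SigmaI[OF inner]) (use gS nonneg in \<open>auto simp: has_sum_imp_summable\<close>)
  then show ?thesis
    by (rule has_sum_SigmaI[OF inner gS])
qed

lemma powser_coeff_unique:
  fixes c d :: "nat \<Rightarrow> 'a::{real_normed_field,banach}"
  assumes "0 < \<delta>"
    and c: "\<And>y. norm y < \<delta> \<Longrightarrow> (\<lambda>n. c n * y ^ n) sums F y"
    and d: "\<And>y. norm y < \<delta> \<Longrightarrow> (\<lambda>n. d n * y ^ n) sums F y"
  shows "c n = d n"
proof -
  define g where "g n = c n - d n" for n
  have g: "(\<lambda>n. g n * y ^ n) sums 0" if "norm y < \<delta>" for y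
    using sums_diff[OF c[OF that] d[OF that]] by (simp add: g_def algebra_simps)
  have "g n = 0" for n
  proof (induction n rule: less_induct)
    case (less n)
    have "(\<lambda>m. g (m + n) * y ^ m) sums 0" if "y \<noteq> 0" "norm y < \<delta>" for y
    proof -
      have "(\<lambda>m. g (m + n) * y ^ (m + n)) sums 0"
        using sums_iff_shift[of "\<lambda>m. g m * y ^ m" n 0] g[OF that(2)] less by simp
      from sums_mult2[OF this, of "inverse (y ^ n)"] show ?thesis
        using that by (simp add: power_add field_simps)
    qed
    from powser_limit_0_strong[OF \<open>0 < \<delta>\<close> this]
    have "((\<lambda>_. 0) \<longlongrightarrow> g (0 + n)) (at (0 :: 'a))"
      by blast
    then show ?case
      by (simp add: tendsto_const_iff)
  qed
  then show ?thesis
    by (simp add: g_def)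
qed

lemma summable_integral_norm_dominated:
  fixes f :: "nat \<Rightarrow> 'a \<Rightarrow> real"
  assumes f: "\<And>n. integrable M (f n)" and g: "integrable M g"
    and summable: "\<And>x. summable (\<lambda>n. norm (f n x))"
    and dominated: "\<And>x. (\<Sum>n. norm (f n x)) \<le> g x"
  shows "summable (\<lambda>n. \<integral>x. norm (f n x) \<partial>M)"
proof (rule summable_suminf_not_top)
  have g_nonneg: "0 \<le> g x" for x
    using dominated[of x] suminf_nonneg[OF summable, of x] by simp
  have "(\<Sum>n. ennreal (\<integral>x. norm (f n x) \<partial>M)) = (\<Sum>n. \<integral>\<^sup>+x. ennreal (norm (f n x)) \<partial>M)"
    using f by (intro suminf_cong nn_integral_eq_integral[symmetric] integrable_norm) auto
  also have "\<dots> = (\<integral>\<^sup>+x. (\<Sum>n. ennreal (norm (f n x))) \<partial>M)"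
    using f by (intro nn_integral_suminf[symmetric]) auto
  also have "\<dots> = (\<integral>\<^sup>+x. ennreal (\<Sum>n. norm (f n x)) \<partial>M)"
    using summable by (intro nn_integral_cong suminf_ennreal2) auto
  also have "\<dots> \<le> (\<integral>\<^sup>+x. ennreal (g x) \<partial>M)"
    by (intro nn_integral_mono ennreal_leI dominated)
  also have "\<dots> = ennreal (\<integral>x. g x \<partial>M)"
    using g g_nonneg by (intro nn_integral_eq_integral) auto
  finally show "(\<Sum>n. ennreal (\<integral>x. norm (f n x) \<partial>M)) \<noteq> top"
    by (rule neq_top_trans[OF ennreal_neq_top])
qed simp

lemma nn_integral_FTC_Ioo:
  fixes f F :: "real \<Rightarrow> real"
  assumes "a < b"
    and "\<And>x. a < x \<Longrightarrow> x < b \<Longrightarrow> DERIV F x :> f x"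
    and "\<And>x. a < x \<Longrightarrow> x < b \<Longrightarrow> isCont f x"
    and nonneg: "\<And>x. a < x \<Longrightarrow> x < b \<Longrightarrow> 0 \<le> f x"
    and "(F \<longlongrightarrow> A) (at_right a)" and "(F \<longlongrightarrow> B) (at_left b)"
  shows "(\<integral>\<^sup>+x. ennreal (f x) * indicator {a<..<b} x \<partial>lborel) = ennreal (B - A)"
proof -
  note FTC = interval_integral_FTC_nonneg[of "ereal a" "ereal b" F f A B]
  have int: "set_integrable lborel {a<..<b} f" and val: "(LBINT x=ereal a..ereal b. f x) = B - A"
    using FTC assms by (simp_all add: ereal_tendsto_simps)
  have "(\<integral>\<^sup>+x. ennreal (f x) * indicator {a<..<b} x \<partial>lborel)
      = (\<integral>\<^sup>+x. ennreal (indicator {a<..<b} x *\<^sub>R f x) \<partial>lborel)"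
    by (simp add: nn_integral_set_ennreal mult.commute)
  also have "\<dots> = ennreal (LINT x:{a<..<b}|lborel. f x)"
    unfolding set_lebesgue_integral_def using int nonneg
    by (intro nn_integral_eq_integral) (auto simp: set_integrable_def split: split_indicator)
  also have "(LINT x:{a<..<b}|lborel. f x) = B - A"
    using val \<open>a < b\<close> by (simp add: interval_lebesgue_integral_le_eq)
  finally show ?thesis .
qed

lemma nn_integral_Beta:
  fixes p q :: real
  assumes "0 < p" and "0 < q"
  shows "(\<integral>\<^sup>+t. ennreal (indicator {0<..<1} t * (t powr (p - 1) * (1 - t) powr (q - 1))) \<partial>lborel) = ennreal (Beta p q)"
proof -
  have "(\<integral>\<^sup>+t. ennreal (indicator {0<..<1} t * (t powr (p - 1) * (1 - t) powr (q - 1))) \<partial>lborel)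
      = (\<integral>\<^sup>+t. ennreal (indicator {0..1} t * (t powr (p - 1) * (1 - t) powr (q - 1))) \<partial>lborel)"
    using AE_lborel_singleton[of 0] AE_lborel_singleton[of 1]
    by (intro nn_integral_cong_AE) (auto split: split_indicator)
  also have "\<dots> = ennreal (Beta p q)"
    by (rule nn_integral_has_integral_lebesgue[OF _ has_integral_Beta_real[OF assms]]) simp
  finally show ?thesis .
qed

lemma powr_minus_sums_pochhammer:
  fixes s b :: real
  assumes "0 < b" and "b < 2"
  shows "(\<lambda>k. pochhammer s k / fact k * (1 - b) ^ k) sums b powr (- s)"
proof -
  have "\<bar>b - 1\<bar> < 1"
    using assms by auto
  from gen_binomial_real[OF this, of "- s"]
  have "(\<lambda>k. ((- s) gchoose k) * (b - 1) ^ k) sums b powr (- s)"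
    by simp
  moreover have "((- s) gchoose k) * (b - 1) ^ k = pochhammer s k / fact k * (1 - b) ^ k" for k
  proof -
    have "((- s) gchoose k) * (b - 1) ^ k = pochhammer s k / fact k * ((-1) ^ k * (b - 1) ^ k)"
      by (simp add: gbinomial_pochhammer)
    also have "(-1) ^ k * (b - 1) ^ k = (1 - b) ^ k"
      by (simp flip: power_mult_distrib)
    finally show ?thesis .
  qed
  ultimately show ?thesis
    by simp
qed

lemma tendsto_mult_ln_power_at_right_0: "((\<lambda>u. u * (C - ln u) ^ j) \<longlongrightarrow> (0::real)) (at_right 0)"
proof -
  have "filterlim (\<lambda>u::real. C - ln u) at_top (at_right 0)"
    by real_asymp
  from filterlim_compose[OF tendsto_power_div_exp_0 this]
  have "((\<lambda>u. exp C * ((C - ln u) ^ j / exp (C - ln u))) \<longlongrightarrow> exp C * 0) (at_right 0)"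
    by (intro tendsto_mult tendsto_const)
  moreover have "\<forall>\<^sub>F u in at_right 0. exp C * ((C - ln u) ^ j / exp (C - ln u)) = u * (C - ln u) ^ j"
    using eventually_at_right_less[of "0::real"] by eventually_elim (simp add: exp_diff)
  ultimately show ?thesis
    by (simp add: Lim_transform_eventually)
qed

lemma Gamma_series'_ratio_tendsto_1:
  fixes z :: real
  assumes "z \<notin> \<int>\<^sub>\<le>\<^sub>0"
  shows "(\<lambda>n. fact (n - 1) * exp (z * ln (real n)) / Gamma (z + real n)) \<longlonglongrightarrow> 1"
proof -
  have "Gamma z \<noteq> 0"
    using assms by (simp add: Gamma_eq_zero_iff)
  then have "(\<lambda>n. Gamma_series' z n / Gamma z) \<longlonglongrightarrow> Gamma z / Gamma z"
    by (intro tendsto_divide Gamma_series'_LIMSEQ tendsto_const)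
  moreover have "Gamma_series' z n / Gamma z = fact (n - 1) * exp (z * ln (real n)) / Gamma (z + real n)" for n
    unfolding Gamma_series'_def using pochhammer_Gamma[OF assms, of n] \<open>Gamma z \<noteq> 0\<close>
    by (simp add: field_simps)
  ultimately show ?thesis
    using \<open>Gamma z \<noteq> 0\<close> by simp
qed

section \<open>Zeta-star values of twos with indices above \<open>k\<close>\<close>

definition inverse_squares_tail :: "nat \<Rightarrow> real" where
  "inverse_squares_tail k = (\<Sum>i. inverse (real (Suc (k + i)) ^ 2))"

lemma summable_inverse_squares_from: "summable (\<lambda>i. inverse (real (Suc (k + i)) ^ 2))"
proof -
  have "summable (\<lambda>n. inverse (real n ^ 2))"
    by (rule inverse_power_summable) auto
  from summable_ignore_initial_segment[OF this, of "Suc k"] show ?thesis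
    by (simp add: add.commute)
qed

lemma inverse_squares_tail_eq: "inverse_squares_tail k = pi\<^sup>2 / 6 - (\<Sum>i<k. inverse (real (Suc i) ^ 2))"
proof -
  have "(\<lambda>i. inverse (real (Suc i) ^ 2)) sums (pi\<^sup>2 / 6)"
    using inverse_squares_sums by (simp add: inverse_eq_divide)
  from suminf_minus_initial_segment[OF sums_summable[OF this], of k] sums_unique[OF this]
  show ?thesis
    by (simp add: inverse_squares_tail_def add.commute)
qed

lemma inverse_squares_tail_le: "inverse_squares_tail k \<le> pi\<^sup>2 / 6"
  unfolding inverse_squares_tail_eq by (simp add: sum_nonneg)

lemma inverse_squares_tail_tendsto_0: "inverse_squares_tail \<longlonglongrightarrow> 0"
proof -
  have "(\<lambda>i. inverse (real (Suc i) ^ 2)) sums (pi\<^sup>2 / 6)"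
    using inverse_squares_sums by (simp add: inverse_eq_divide)
  then have "(\<lambda>k. pi\<^sup>2 / 6 - (\<Sum>i<k. inverse (real (Suc i) ^ 2))) \<longlonglongrightarrow> pi\<^sup>2 / 6 - pi\<^sup>2 / 6"
    unfolding sums_def by (intro tendsto_diff tendsto_const)
  then show ?thesis
    by (simp add: inverse_squares_tail_eq[abs_def])
qed

lemma weighted_inverse_squares_tail:
  fixes g :: "nat \<Rightarrow> real"
  assumes "\<And>j. 0 \<le> g j" and "\<And>j. g j \<le> C"
  shows "summable (\<lambda>i. inverse (real (Suc (k + i)) ^ 2) * g (k + i))"
    and "0 \<le> (\<Sum>i. inverse (real (Suc (k + i)) ^ 2) * g (k + i))"
    and "(\<Sum>i. inverse (real (Suc (k + i)) ^ 2) * g (k + i)) \<le> C * inverse_squares_tail k"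
proof -
  have le: "inverse (real (Suc (k + i)) ^ 2) * g (k + i) \<le> C * inverse (real (Suc (k + i)) ^ 2)" for i
    using assms by (simp add: mult.commute mult_left_mono)
  have dom: "summable (\<lambda>i. C * inverse (real (Suc (k + i)) ^ 2))"
    by (rule summable_mult[OF summable_inverse_squares_from])
  show sm: "summable (\<lambda>i. inverse (real (Suc (k + i)) ^ 2) * g (k + i))"
    by (rule summable_comparison_test'[OF dom]) (use le assms(1) in auto)
  show "0 \<le> (\<Sum>i. inverse (real (Suc (k + i)) ^ 2) * g (k + i))"
    by (rule suminf_nonneg[OF sm]) (simp add: assms(1))
  have "(\<Sum>i. inverse (real (Suc (k + i)) ^ 2) * g (k + i)) \<le> (\<Sum>i. C * inverse (real (Suc (k + i)) ^ 2))"
    by (rule suminf_le[OF le sm dom])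
  also have "\<dots> = C * inverse_squares_tail k"
    unfolding inverse_squares_tail_def by (rule suminf_mult[OF summable_inverse_squares_from])
  finally show "(\<Sum>i. inverse (real (Suc (k + i)) ^ 2) * g (k + i)) \<le> C * inverse_squares_tail k" .
qed

text \<open>\<open>zeta_twos_above m k\<close> is \<open>\<zeta>\<^sup>\<star>({2}\<^sup>m)\<close> with all summation indices greater than \<open>k\<close>;
  the recursion sums out the smallest index.\<close>
fun zeta_twos_above :: "nat \<Rightarrow> nat \<Rightarrow> real" where
  "zeta_twos_above 0 k = 1"
| "zeta_twos_above (Suc m) k = (\<Sum>i. inverse (real (Suc (k + i)) ^ 2) * zeta_twos_above m (k + i))"

declare zeta_twos_above.simps(2)[simp del]

lemma zeta_twos_above_bounds: "0 \<le> zeta_twos_above m k \<and> zeta_twos_above m k \<le> (pi\<^sup>2 / 6) ^ m"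
proof (induction m arbitrary: k)
  case 0
  then show ?case by simp
next
  case (Suc m)
  note tail = weighted_inverse_squares_tail[of "zeta_twos_above m" "(pi\<^sup>2 / 6) ^ m" k]
  have "zeta_twos_above (Suc m) k \<le> (pi\<^sup>2 / 6) ^ m * inverse_squares_tail k"
    unfolding zeta_twos_above.simps(2) by (rule tail(3)) (use Suc.IH in auto)
  also have "\<dots> \<le> (pi\<^sup>2 / 6) ^ m * (pi\<^sup>2 / 6)"
    by (intro mult_left_mono inverse_squares_tail_le) simp
  finally show ?case
    using tail(2) Suc.IH by (simp add: zeta_twos_above.simps(2) mult.commute)
qed

lemma zeta_twos_above_nonneg: "0 \<le> zeta_twos_above m k"
  using zeta_twos_above_bounds by blast

lemma zeta_twos_above_le: "zeta_twos_above m k \<le> (pi\<^sup>2 / 6) ^ m"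
  using zeta_twos_above_bounds by blast

lemma summable_zeta_twos_above:
  "summable (\<lambda>i. inverse (real (Suc (k + i)) ^ 2) * zeta_twos_above m (k + i))"
  by (rule weighted_inverse_squares_tail(1)) (use zeta_twos_above_bounds in auto)

lemma zeta_twos_above_Suc_le:
  "zeta_twos_above (Suc m) k \<le> (pi\<^sup>2 / 6) ^ m * inverse_squares_tail k"
  unfolding zeta_twos_above.simps(2)
  by (rule weighted_inverse_squares_tail(3)) (use zeta_twos_above_bounds in auto)

lemma zeta_twos_above_Suc_eq:
  "zeta_twos_above (Suc m) k =
     inverse (real (Suc k) ^ 2) * zeta_twos_above m k + zeta_twos_above (Suc m) (Suc k)"
  using suminf_split_head[OF summable_zeta_twos_above[of k m]]
  by (simp add: zeta_twos_above.simps(2))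

definition sorted_lists_above :: "nat \<Rightarrow> nat \<Rightarrow> nat list set" where
  "sorted_lists_above m k = {ks. length ks = m \<and> sorted ks \<and> (\<forall>j\<in>set ks. k < j)}"

definition inverse_squares_prod :: "nat list \<Rightarrow> real" where
  "inverse_squares_prod ks = (\<Prod>i<length ks. inverse (real (ks ! i) ^ 2))"

lemma inverse_squares_prod_nonneg: "0 \<le> inverse_squares_prod ks"
  unfolding inverse_squares_prod_def by (simp add: prod_nonneg)

lemma inverse_squares_prod_Cons: "inverse_squares_prod (j # ks) = inverse (real j ^ 2) * inverse_squares_prod ks"
  unfolding inverse_squares_prod_def by (simp only: length_Cons prod.lessThan_Suc_shift) simp

lemma zeta_star_summand_Cons:
  assumes "length ks = m"
  shows "(\<Prod>i<length (a # replicate m 2). inverse (real ((j # ks) ! i) ^ ((a # replicate m 2) ! i)))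
       = inverse (real j ^ a) * inverse_squares_prod ks"
proof -
  have "(\<Prod>i<m. inverse (real (ks ! i) ^ (replicate m 2 ! i))) = inverse_squares_prod ks"
    unfolding inverse_squares_prod_def using assms by (intro prod.cong) auto
  then show ?thesis
    by (simp only: length_Cons length_replicate prod.lessThan_Suc_shift nth_Cons_0 nth_Cons_Suc)
qed

lemma bij_betw_Cons_sorted_lists_above:
  "bij_betw (\<lambda>(i, ks). Suc (k + i) # ks)
     (Sigma UNIV (\<lambda>i. sorted_lists_above m (k + i))) (sorted_lists_above (Suc m) k)"
proof (rule bij_betwI')
  fix y assume y: "y \<in> sorted_lists_above (Suc m) k"
  then obtain j ks where yj: "y = j # ks" and "k < j"
    by (cases y) (auto simp: sorted_lists_above_def)
  then obtain i where "j = Suc (k + i)"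
    using less_iff_Suc_add by auto
  with y yj show "\<exists>x\<in>Sigma UNIV (\<lambda>i. sorted_lists_above m (k + i)). y = (case x of (i, ks) \<Rightarrow> Suc (k + i) # ks)"
    by (intro bexI[of _ "(i, ks)"]) (auto simp: sorted_lists_above_def)
qed (force simp: sorted_lists_above_def)+

lemma has_sum_inverse_squares_prod:
  "(inverse_squares_prod has_sum zeta_twos_above m k) (sorted_lists_above m k)"
proof (induction m arbitrary: k)
  case 0
  have "sorted_lists_above 0 k = {[]}"
    by (auto simp: sorted_lists_above_def)
  moreover have "inverse_squares_prod [] = 1"
    by (simp add: inverse_squares_prod_def)
  ultimately show ?case
    using has_sum_finite[of "{[]}" inverse_squares_prod] by simp
next
  case (Suc m)
  let ?f = "\<lambda>(i, ks). inverse (real (Suc (k + i)) ^ 2) * inverse_squares_prod ks"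
  have "(?f has_sum zeta_twos_above (Suc m) k) (Sigma UNIV (\<lambda>i. sorted_lists_above m (k + i)))"
  proof (rule has_sum_Sigma_nonneg_sums)
    show "((\<lambda>ks. ?f (i, ks)) has_sum inverse (real (Suc (k + i)) ^ 2) * zeta_twos_above m (k + i))
        (sorted_lists_above m (k + i))" for i
      using has_sum_cmult_right[OF Suc.IH[of "k + i"]] by simp
    show "(\<lambda>i. inverse (real (Suc (k + i)) ^ 2) * zeta_twos_above m (k + i)) sums zeta_twos_above (Suc m) k"
      using summable_zeta_twos_above by (simp add: summable_sums zeta_twos_above.simps(2))
  qed (simp add: inverse_squares_prod_nonneg)
  then have "((\<lambda>x. inverse_squares_prod ((\<lambda>(i, ks). Suc (k + i) # ks) x)) has_sum zeta_twos_above (Suc m) k)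
      (Sigma UNIV (\<lambda>i. sorted_lists_above m (k + i)))"
    by (rule has_sum_cong[THEN iffD1, rotated]) (auto simp: inverse_squares_prod_Cons)
  then show ?case
    by (rule has_sum_reindex_bij_betw[OF bij_betw_Cons_sorted_lists_above, THEN iffD1])
qed

lemma summable_zeta_star_series:
  "summable (\<lambda>i. inverse (real (Suc i) ^ (r + 2)) * zeta_twos_above m i)"
proof (rule summable_comparison_test')
  show "summable (\<lambda>i. (pi\<^sup>2 / 6) ^ m * inverse (real (Suc (0 + i)) ^ 2))"
    by (rule summable_mult[OF summable_inverse_squares_from])
  have "inverse (real (Suc i) ^ (r + 2)) \<le> inverse (real (Suc i) ^ 2)" for i
    by (intro le_imp_inverse_le power_increasing) auto
  then show "norm (inverse (real (Suc i) ^ (r + 2)) * zeta_twos_above m i)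
      \<le> (pi\<^sup>2 / 6) ^ m * inverse (real (Suc (0 + i)) ^ 2)" for i
    using mult_mono[OF _ zeta_twos_above_le, of "inverse (real (Suc i) ^ (r + 2))"]
      zeta_twos_above_nonneg[of m i]
    by (simp add: mult.commute)
qed

lemma zeta_star_sums:
  "(\<lambda>i. inverse (real (Suc i) ^ (r + 2)) * zeta_twos_above m i) sums zeta_star ((r + 2) # replicate m 2)"
proof -
  let ?as = "(r + 2) # replicate m 2"
  let ?F = "\<lambda>ks. \<Prod>i<length ?as. inverse (real (ks ! i) ^ (?as ! i))"
  let ?f = "\<lambda>(i, ks). inverse (real (Suc i) ^ (r + 2)) * inverse_squares_prod ks"
  let ?S = "\<Sum>i. inverse (real (Suc i) ^ (r + 2)) * zeta_twos_above m i"
  have "(?f has_sum ?S) (Sigma UNIV (\<lambda>i. sorted_lists_above m (0 + i)))"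
  proof (rule has_sum_Sigma_nonneg_sums)
    show "((\<lambda>ks. ?f (i, ks)) has_sum inverse (real (Suc i) ^ (r + 2)) * zeta_twos_above m i)
        (sorted_lists_above m (0 + i))" for i
      using has_sum_cmult_right[OF has_sum_inverse_squares_prod[of m i]] by simp
  qed (use summable_zeta_star_series in \<open>auto simp: summable_sums inverse_squares_prod_nonneg\<close>)
  moreover have "?f x = ?F ((\<lambda>(i, ks). Suc (0 + i) # ks) x)"
    if x_mem: "x \<in> Sigma UNIV (\<lambda>i. sorted_lists_above m (0 + i))" for x
  proof -
    obtain i ks where x: "x = (i, ks)" and len: "length ks = m"
      using x_mem by (cases x) (auto simp: sorted_lists_above_def)
    show ?thesis
      unfolding x prod.case add_0 by (rule zeta_star_summand_Cons[OF len, symmetric])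
  qed
  ultimately have "((\<lambda>x. ?F ((\<lambda>(i, ks). Suc (0 + i) # ks) x)) has_sum ?S)
      (Sigma UNIV (\<lambda>i. sorted_lists_above m (0 + i)))"
    by (rule has_sum_cong[THEN iffD1, rotated])
  then have "(?F has_sum ?S) (sorted_lists_above (Suc m) 0)"
    by (rule has_sum_reindex_bij_betw[OF bij_betw_Cons_sorted_lists_above, THEN iffD1])
  moreover have "sorted_lists_above (Suc m) 0 = {ks. length ks = length ?as \<and> sorted ks \<and> (\<forall>k\<in>set ks. 1 \<le> k)}"
    by (auto simp: sorted_lists_above_def)
  ultimately have "zeta_star ?as = ?S"
    unfolding zeta_star_def by (simp add: infsumI)
  then show ?thesis
    using summable_zeta_star_series by (simp add: summable_sums)
qed

section \<open>A product formula for the Gamma function\<close>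

definition zeta_twos_above_gf :: "nat \<Rightarrow> real \<Rightarrow> real" where
  "zeta_twos_above_gf k y = (\<Sum>m. zeta_twos_above m k * (y\<^sup>2) ^ m)"

lemma summable_zeta_twos_above_gf:
  assumes "y\<^sup>2 * (pi\<^sup>2 / 6) < 1"
  shows "summable (\<lambda>m. zeta_twos_above m k * (y\<^sup>2) ^ m)"
proof (rule summable_comparison_test')
  show "summable (\<lambda>m. (y\<^sup>2 * (pi\<^sup>2 / 6)) ^ m)"
    by (rule summable_geometric) (use assms in auto)
  show "norm (zeta_twos_above m k * (y\<^sup>2) ^ m) \<le> (y\<^sup>2 * (pi\<^sup>2 / 6)) ^ m" for m
    using mult_right_mono[OF zeta_twos_above_le, of "(y\<^sup>2) ^ m" m k] zeta_twos_above_nonneg[of m k]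
    unfolding power_mult_distrib by (simp add: mult_ac)
qed

lemma zeta_twos_above_gf_Suc:
  assumes "y\<^sup>2 * (pi\<^sup>2 / 6) < 1"
  shows "zeta_twos_above_gf (Suc k) y = zeta_twos_above_gf k y * (1 - y\<^sup>2 / real (Suc k) ^ 2)"
proof -
  let ?a = "\<lambda>m. zeta_twos_above m k * (y\<^sup>2) ^ m"
  let ?b = "\<lambda>m. zeta_twos_above m (Suc k) * (y\<^sup>2) ^ m"
  let ?c = "y\<^sup>2 / real (Suc k) ^ 2"
  have sa: "summable ?a" and sb: "summable ?b"
    using summable_zeta_twos_above_gf[OF assms] by auto
  have "zeta_twos_above_gf k y - 1 = (\<Sum>m. ?a (Suc m))"
    using suminf_split_head[OF sa] by (simp add: zeta_twos_above_gf_def)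
  also have "\<dots> = (\<Sum>m. ?c * ?a m + ?b (Suc m))"
    by (subst zeta_twos_above_Suc_eq) (simp add: algebra_simps divide_inverse)
  also have "\<dots> = (\<Sum>m. ?c * ?a m) + (\<Sum>m. ?b (Suc m))"
    by (rule suminf_add[symmetric, OF summable_mult[OF sa] summable_Suc_iff[THEN iffD2, OF sb]])
  also have "\<dots> = ?c * zeta_twos_above_gf k y + (zeta_twos_above_gf (Suc k) y - 1)"
    using suminf_mult[OF sa, of ?c] suminf_split_head[OF sb] by (simp add: zeta_twos_above_gf_def)
  finally show ?thesis
    by (simp add: algebra_simps)
qed

lemma zeta_twos_above_gf_ge_1:
  assumes "y\<^sup>2 * (pi\<^sup>2 / 6) < 1"
  shows "1 \<le> zeta_twos_above_gf k y"
  using sum_le_suminf[OF summable_zeta_twos_above_gf[OF assms], of "{0}"]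
  by (simp add: zeta_twos_above_gf_def zeta_twos_above_nonneg)

lemma zeta_twos_above_gf_minus_1_le:
  assumes y: "y\<^sup>2 * (pi\<^sup>2 / 6) < 1"
  shows "zeta_twos_above_gf k y - 1 \<le> y\<^sup>2 / (1 - y\<^sup>2 * (pi\<^sup>2 / 6)) * inverse_squares_tail k"
proof -
  define q where "q = y\<^sup>2 * (pi\<^sup>2 / 6)"
  have q: "0 \<le> q" "q < 1"
    using y by (auto simp: q_def)
  let ?a = "\<lambda>m. zeta_twos_above m k * (y\<^sup>2) ^ m"
  let ?g = "\<lambda>m. (y\<^sup>2 * inverse_squares_tail k) * q ^ m"
  have sa: "summable ?a"
    by (rule summable_zeta_twos_above_gf[OF y])
  have "?a (Suc m) \<le> ?g m" for m
  proof -
    have "?a (Suc m) \<le> ((pi\<^sup>2 / 6) ^ m * inverse_squares_tail k) * (y\<^sup>2) ^ Suc m"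
      by (rule mult_right_mono[OF zeta_twos_above_Suc_le]) simp
    also have "\<dots> = ?g m"
      unfolding q_def power_mult_distrib power_Suc by (simp only: mult_ac)
    finally show ?thesis .
  qed
  moreover have "summable ?g"
    using q by (intro summable_mult summable_geometric) auto
  ultimately have "(\<Sum>m. ?a (Suc m)) \<le> (\<Sum>m. ?g m)"
    by (intro suminf_le summable_Suc_iff[THEN iffD2, OF sa])
  also have "\<dots> = y\<^sup>2 / (1 - q) * inverse_squares_tail k"
    using q by (simp add: suminf_mult suminf_geometric summable_geometric)
  finally show ?thesis
    using suminf_split_head[OF sa] by (simp add: zeta_twos_above_gf_def q_def)
qed

lemma zeta_twos_above_gf_tendsto_1:
  assumes y: "y\<^sup>2 * (pi\<^sup>2 / 6) < 1"
  shows "(\<lambda>k. zeta_twos_above_gf k y) \<longlonglongrightarrow> 1"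
proof -
  define C where "C = y\<^sup>2 / (1 - y\<^sup>2 * (pi\<^sup>2 / 6))"
  have "(\<lambda>k. C * inverse_squares_tail k) \<longlonglongrightarrow> C * 0"
    by (intro tendsto_mult tendsto_const inverse_squares_tail_tendsto_0)
  then have upper_lim: "(\<lambda>k. C * inverse_squares_tail k) \<longlonglongrightarrow> 0"
    by simp
  have "\<forall>\<^sub>F k in sequentially. 0 \<le> zeta_twos_above_gf k y - 1"
    using zeta_twos_above_gf_ge_1[OF y] by (intro always_eventually) simp
  moreover have "\<forall>\<^sub>F k in sequentially. zeta_twos_above_gf k y - 1 \<le> C * inverse_squares_tail k"
    unfolding C_def by (intro always_eventually allI zeta_twos_above_gf_minus_1_le y)
  ultimately have "(\<lambda>k. zeta_twos_above_gf k y - 1) \<longlonglongrightarrow> 0"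
    by (rule tendsto_sandwich[OF _ _ tendsto_const upper_lim])
  then have "(\<lambda>k. zeta_twos_above_gf k y - 1 + 1) \<longlonglongrightarrow> 0 + 1"
    by (intro tendsto_add tendsto_const)
  then show ?thesis
    by simp
qed

definition gamma_ratio :: "nat \<Rightarrow> real \<Rightarrow> real" where
  "gamma_ratio k y = Gamma (real (Suc k) + y) * Gamma (real (Suc k) - y) / (fact k)\<^sup>2"

lemma gamma_ratio_pos: "\<bar>y\<bar> < 1 \<Longrightarrow> 0 < gamma_ratio k y"
  unfolding gamma_ratio_def by (intro divide_pos_pos mult_pos_pos Gamma_real_pos) auto

lemma gamma_ratio_Suc:
  assumes "\<bar>y\<bar> < 1"
  shows "gamma_ratio (Suc k) y = gamma_ratio k y * (1 - y\<^sup>2 / real (Suc k) ^ 2)"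
proof -
  define a where "a = real (Suc k) + y"
  define b where "b = real (Suc k) - y"
  have "a \<notin> \<int>\<^sub>\<le>\<^sub>0" "b \<notin> \<int>\<^sub>\<le>\<^sub>0"
    using assms by (auto simp: a_def b_def elim!: nonpos_Ints_cases)
  then have Gamma_Suc: "Gamma (a + 1) = a * Gamma a" "Gamma (b + 1) = b * Gamma b"
    by (simp_all add: Gamma_plus1)
  have "real (Suc (Suc k)) + y = a + 1" "real (Suc (Suc k)) - y = b + 1"
    by (simp_all add: a_def b_def)
  then have "gamma_ratio (Suc k) y = Gamma (a + 1) * Gamma (b + 1) / (real (Suc k) * fact k)\<^sup>2"
    unfolding gamma_ratio_def by (simp only: fact_Suc)
  also have "\<dots> = (a * b) * (Gamma a * Gamma b) / (real (Suc k) * fact k)\<^sup>2"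
    by (simp only: Gamma_Suc mult_ac)
  also have "\<dots> = (a * b / real (Suc k) ^ 2) * gamma_ratio k y"
    unfolding gamma_ratio_def a_def b_def by (simp add: power_mult_distrib)
  also have "a * b / real (Suc k) ^ 2 = 1 - y\<^sup>2 / real (Suc k) ^ 2"
  proof -
    have "a * b = real (Suc k) ^ 2 - y\<^sup>2"
      by (simp add: a_def b_def power2_eq_square algebra_simps)
    then show ?thesis
      by (simp add: diff_divide_distrib)
  qed
  finally show ?thesis
    by (simp only: mult.commute)
qed

lemma gamma_ratio_tendsto_1:
  assumes "\<bar>y\<bar> < 1"
  shows "(\<lambda>k. gamma_ratio k y) \<longlonglongrightarrow> 1"
proof -
  let ?R = "\<lambda>z n. fact (n - 1) * exp (z * ln (real n)) / Gamma (z + real n)"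
  have "1 + y \<notin> \<int>\<^sub>\<le>\<^sub>0" "1 - y \<notin> \<int>\<^sub>\<le>\<^sub>0"
    using assms by (auto elim!: nonpos_Ints_cases)
  then have "(\<lambda>n. ?R (1 + y) n * ?R (1 - y) n) \<longlonglongrightarrow> 1 * 1"
    by (intro tendsto_mult Gamma_series'_ratio_tendsto_1)
  then have lim: "(\<lambda>n. ?R (1 + y) n * ?R (1 - y) n) \<longlonglongrightarrow> 1"
    by simp
  have eq: "?R (1 + y) n * ?R (1 - y) n = inverse (gamma_ratio n y)" if "0 < n" for n
  proof -
    have "exp ((1 + y) * ln (real n)) * exp ((1 - y) * ln (real n)) = exp (2 * ln (real n))"
      by (simp add: exp_add[symmetric] algebra_simps)
    also have "2 * ln (real n) = ln (real n ^ 2)"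
      using that by (simp add: ln_realpow)
    also have "exp (ln (real n ^ 2)) = real n ^ 2"
      using that by simp
    finally have "exp ((1 + y) * ln (real n)) * exp ((1 - y) * ln (real n)) = real n ^ 2" .
    moreover have "fact n = real n * fact (n - 1)"
      using that by (metis fact_reduce of_nat_fact)
    ultimately show ?thesis
      unfolding gamma_ratio_def by (simp add: field_simps power2_eq_square add_ac)
  qed
  have "(\<lambda>n. inverse (gamma_ratio n y)) \<longlonglongrightarrow> 1"
    by (rule Lim_transform_eventually[OF lim eventually_mono[OF eventually_gt_at_top eq]])
  from tendsto_inverse[OF this] show ?thesis
    by simp
qed

text \<open>Both sides satisfy \<open>f (k + 1) = f k (1 - y\<^sup>2 / (k + 1)\<^sup>2)\<close> and tend to \<open>1\<close>.\<close>
lemma gamma_ratio_eq_zeta_twos_above_gf: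
  assumes y1: "\<bar>y\<bar> < 1" and y: "y\<^sup>2 * (pi\<^sup>2 / 6) < 1"
  shows "gamma_ratio k y = zeta_twos_above_gf k y"
proof -
  define Q where "Q k = gamma_ratio k y / zeta_twos_above_gf k y" for k
  have "1 - y\<^sup>2 / real (Suc k) ^ 2 \<noteq> 0" for k
  proof -
    have "y\<^sup>2 < 1"
      using y1 by (simp add: abs_square_less_1)
    also have "1 \<le> real (Suc k) ^ 2"
      by simp
    finally show ?thesis
      by simp
  qed
  then have "Q (Suc k) = Q k" for k
    unfolding Q_def gamma_ratio_Suc[OF y1] zeta_twos_above_gf_Suc[OF y] by simp
  then have Q_const: "Q k = Q 0" for k
    by (induction k) simp_all
  have "Q \<longlonglongrightarrow> 1"
    unfolding Q_def[abs_def]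
    using tendsto_divide[OF gamma_ratio_tendsto_1[OF y1] zeta_twos_above_gf_tendsto_1[OF y]] by simp
  moreover have "\<forall>\<^sub>F k in sequentially. Q k = Q 0"
    by (intro always_eventually allI Q_const)
  ultimately have "(\<lambda>_. Q 0) \<longlonglongrightarrow> 1"
    by (rule Lim_transform_eventually)
  then have "Q 0 = 1"
    by (simp add: LIMSEQ_const_iff)
  then show ?thesis
    using Q_const[of k] zeta_twos_above_gf_ge_1[OF y, of k] by (simp add: Q_def)
qed

lemma gamma_ratio_le_gamma_ratio_0:
  assumes "\<bar>y\<bar> < 1"
  shows "gamma_ratio k y \<le> gamma_ratio 0 y"
proof (induction k)
  case (Suc k)
  have "gamma_ratio k y * (1 - y\<^sup>2 / real (Suc k) ^ 2) \<le> gamma_ratio k y"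
    using gamma_ratio_pos[OF assms, of k] by (simp add: mult_le_cancel_left1)
  then show ?case
    using Suc gamma_ratio_Suc[OF assms, of k] by simp
qed simp

section \<open>The generating function of the zeta-star values\<close>

definition zeta_star_gf :: "nat \<Rightarrow> real \<Rightarrow> real" where
  "zeta_star_gf r y = (\<Sum>k. gamma_ratio k y / real (Suc k) ^ (r + 2))"

lemma summable_zeta_star_gf:
  assumes "\<bar>y\<bar> < 1"
  shows "summable (\<lambda>k. gamma_ratio k y / real (Suc k) ^ (r + 2))"
proof (rule summable_comparison_test')
  show "summable (\<lambda>k. gamma_ratio 0 y * inverse (real (Suc (0 + k)) ^ 2))"
    by (rule summable_mult[OF summable_inverse_squares_from])
  have "inverse (real (Suc k) ^ (r + 2)) \<le> inverse (real (Suc k) ^ 2)" for k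
    by (intro le_imp_inverse_le power_increasing) auto
  then show "norm (gamma_ratio k y / real (Suc k) ^ (r + 2)) \<le> gamma_ratio 0 y * inverse (real (Suc (0 + k)) ^ 2)" for k
    using mult_mono[OF gamma_ratio_le_gamma_ratio_0[OF assms]] gamma_ratio_pos[OF assms, of k] gamma_ratio_pos[OF assms, of 0]
    by (simp add: divide_inverse)
qed

lemma zeta_star_gf_nonneg: "\<bar>y\<bar> < 1 \<Longrightarrow> 0 \<le> zeta_star_gf r y"
  unfolding zeta_star_gf_def
  by (intro suminf_nonneg summable_zeta_star_gf) (simp_all add: gamma_ratio_pos less_imp_le)

text \<open>Expand each \<open>gamma_ratio k y\<close> in powers of \<open>y\<^sup>2\<close> and interchange the sums over \<open>k\<close> and \<open>m\<close>.\<close>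
lemma zeta_star_gf_sums:
  assumes y1: "\<bar>y\<bar> < 1" and y: "y\<^sup>2 * (pi\<^sup>2 / 6) < 1"
  shows "(\<lambda>m. zeta_star ((r + 2) # replicate m 2) * (y\<^sup>2) ^ m) sums zeta_star_gf r y"
proof -
  define a where "a = (\<lambda>(k, m). inverse (real (Suc k) ^ (r + 2)) * (zeta_twos_above m k * (y\<^sup>2) ^ m))"
  have "(a has_sum zeta_star_gf r y) (UNIV \<times> UNIV)"
  proof (rule has_sum_Sigma_nonneg_sums)
    fix k
    have "((\<lambda>m. zeta_twos_above m k * (y\<^sup>2) ^ m) has_sum zeta_twos_above_gf k y) UNIV"
      unfolding zeta_twos_above_gf_def
      by (intro sums_nonneg_imp_has_sum summable_sums summable_zeta_twos_above_gf y)
         (simp add: zeta_twos_above_nonneg)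
    from has_sum_cmult_right[OF this, of "inverse (real (Suc k) ^ (r + 2))"]
    show "((\<lambda>m. a (k, m)) has_sum gamma_ratio k y / real (Suc k) ^ (r + 2)) UNIV"
      using gamma_ratio_eq_zeta_twos_above_gf[OF y1 y, of k] by (simp add: a_def divide_inverse mult.commute)
  next
    show "(\<lambda>k. gamma_ratio k y / real (Suc k) ^ (r + 2)) sums zeta_star_gf r y"
      unfolding zeta_star_gf_def by (intro summable_sums summable_zeta_star_gf y1)
  qed (simp add: a_def zeta_twos_above_nonneg)
  then have swapped: "((\<lambda>(m, k). a (k, m)) has_sum zeta_star_gf r y) (UNIV \<times> UNIV)"
    by (subst (asm) has_sum_swap) simp
  have "((\<lambda>k. a (k, m)) has_sum zeta_star ((r + 2) # replicate m 2) * (y\<^sup>2) ^ m) UNIV" for m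
  proof -
    have "(\<lambda>k. inverse (real (Suc k) ^ (r + 2)) * zeta_twos_above m k * (y\<^sup>2) ^ m)
        sums (zeta_star ((r + 2) # replicate m 2) * (y\<^sup>2) ^ m)"
      by (rule sums_mult2[OF zeta_star_sums])
    then have "(\<lambda>k. a (k, m)) sums (zeta_star ((r + 2) # replicate m 2) * (y\<^sup>2) ^ m)"
      by (simp add: a_def mult.assoc)
    then show ?thesis
      by (rule sums_nonneg_imp_has_sum) (simp add: a_def zeta_twos_above_nonneg)
  qed
  then have "((\<lambda>m. zeta_star ((r + 2) # replicate m 2) * (y\<^sup>2) ^ m) has_sum zeta_star_gf r y) UNIV"
    using has_sum_Sigma'[OF swapped] by simp
  then show ?thesis
    by (rule has_sum_imp_sums)
qed

lemma power2_mult_pi2_div_6_less_1: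
  fixes y :: real
  assumes "\<bar>y\<bar> < 1 / 2"
  shows "y\<^sup>2 * (pi\<^sup>2 / 6) < 1"
proof -
  have "y\<^sup>2 = \<bar>y\<bar>\<^sup>2"
    by simp
  also have "\<dots> < (1 / 2)\<^sup>2"
    by (rule power_strict_mono) (use assms in auto)
  finally have "y\<^sup>2 < (1 / 2)\<^sup>2" .
  moreover have "pi\<^sup>2 / 6 < 4\<^sup>2 / 6"
    using power_strict_mono[of pi 4 2] pi_less_4 pi_gt_zero by simp
  ultimately have "y\<^sup>2 * (pi\<^sup>2 / 6) < (1 / 2)\<^sup>2 * (4\<^sup>2 / 6)"
    by (rule mult_strict_mono) auto
  then show ?thesis
    by (simp add: power_divide mult.commute)
qed

lemma zeta_star_gf_powser:
  assumes "\<bar>y\<bar> < 1 / 2"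
  shows "(\<lambda>n. (if even n then zeta_star ((r + 2) # replicate (n div 2) 2) else 0) * y ^ n) sums zeta_star_gf r y"
proof -
  have "\<bar>y\<bar> < 1"
    using assms by simp
  have y: "y\<^sup>2 * (pi\<^sup>2 / 6) < 1"
    using assms by (rule power2_mult_pi2_div_6_less_1)
  have "(\<lambda>n. if even n then zeta_star ((r + 2) # replicate (n div 2) 2) * (y\<^sup>2) ^ (n div 2) else 0)
      sums (0 + zeta_star_gf r y)"
    using sums_if[OF sums_zero zeta_star_gf_sums[OF \<open>\<bar>y\<bar> < 1\<close> y]] by simp
  moreover have "(if even n then zeta_star ((r + 2) # replicate (n div 2) 2) * (y\<^sup>2) ^ (n div 2) else 0)
      = (if even n then zeta_star ((r + 2) # replicate (n div 2) 2) else 0) * y ^ n" for n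
    by (auto simp: power_mult[symmetric] elim!: evenE)
  ultimately show ?thesis
    by simp
qed

section \<open>The inner integral\<close>

text \<open>An antiderivative of \<open>(ln c - ln (1 - b))\<^sup>r (1 - b)\<^sup>k\<close>, obtained by integrating by parts \<open>r\<close> times.\<close>
fun log_power_antideriv :: "real \<Rightarrow> nat \<Rightarrow> nat \<Rightarrow> real \<Rightarrow> real" where
  "log_power_antideriv c k 0 b = - ((1 - b) ^ Suc k) / real (Suc k)"
| "log_power_antideriv c k (Suc r) b =
     - ((1 - b) ^ Suc k * (ln c - ln (1 - b)) ^ Suc r) / real (Suc k)
     + real (Suc r) / real (Suc k) * log_power_antideriv c k r b"

lemma log_power_antideriv_DERIV:
  assumes "b < 1"
  shows "DERIV (log_power_antideriv c k r) b :> (ln c - ln (1 - b)) ^ r * (1 - b) ^ k"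
proof -
  have dU: "DERIV (\<lambda>b. (1 - b) ^ Suc k) b :> (1 + real k) * ((0 - 1) * (1 - b) ^ k)"
    by (intro DERIV_power_Suc derivative_intros)
  have dL: "DERIV (\<lambda>b. ln c - ln (1 - b)) b :> 1 / (1 - b)"
    using assms by (auto intro!: derivative_eq_intros)
  show ?thesis
  proof (induction r)
    case 0
    from DERIV_cdivide[OF DERIV_minus[OF dU], of "real (Suc k)"] show ?case
      by (simp add: fun_eq_iff)
  next
    case (Suc r)
    define u where "u = 1 - b"
    define L where "L = ln c - ln u"
    note d = DERIV_add[OF DERIV_cdivide[OF DERIV_minus[OF DERIV_mult[OF dU DERIV_power_Suc[OF dL]]], where c="real (Suc k)"]
        DERIV_cmult[OF Suc, where c="real (Suc r) / real (Suc k)"], unfolded u_def[symmetric] L_def[symmetric]]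
    have unfold: "log_power_antideriv c k (Suc r) = (\<lambda>b. - ((1 - b) ^ Suc k * (ln c - ln (1 - b)) ^ Suc r) / real (Suc k)
        + real (Suc r) / real (Suc k) * log_power_antideriv c k r b)"
      by (rule ext) simp
    have "u \<noteq> 0"
      using assms by (simp add: u_def)
    have "- ((1 + real k) * ((0 - 1) * X) * (L * Y) + (1 + real r) * (1 / u * Y) * (u * X)) / real (Suc k)
        + real (Suc r) / real (Suc k) * (Y * X) = L * Y * X" for X Y
      using \<open>u \<noteq> 0\<close> by (simp add: field_simps del: of_nat_Suc) (simp add: algebra_simps)
    then have "DERIV (log_power_antideriv c k (Suc r)) b :> L ^ Suc r * u ^ k"
      unfolding unfold by (intro DERIV_cong[OF d]) (simp only: power_Suc)
    then show ?case
      by (simp only: L_def u_def)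
  qed
qed

lemma log_power_antideriv_at: "log_power_antideriv (1 - a) k r a = - fact r * (1 - a) ^ Suc k / real (Suc k) ^ Suc r"
  by (induction r) (simp_all add: field_simps)

lemma log_power_antideriv_tendsto_0:
  assumes "0 < c"
  shows "(log_power_antideriv c k r \<longlongrightarrow> 0) (at_left 1)"
proof (induction r)
  case 0
  have "((\<lambda>b. - ((1 - b) ^ Suc k) / real (Suc k)) \<longlongrightarrow> - ((1 - 1) ^ Suc k) / real (Suc k)) (at_left (1::real))"
    by (intro tendsto_intros) simp
  then show ?case
    by (simp add: fun_eq_iff)
next
  case (Suc r)
  have "filterlim (\<lambda>b::real. 1 - b) (at_right 0) (at_left 1)"
    by real_asymp
  from filterlim_compose[OF tendsto_mult_ln_power_at_right_0 this]
  have "((\<lambda>b. (1 - b) ^ k * ((1 - b) * (ln c - ln (1 - b)) ^ Suc r)) \<longlongrightarrow> (1 - 1) ^ k * 0) (at_left (1::real))"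
    by (intro tendsto_mult tendsto_intros)
  then have "((\<lambda>b. - ((1 - b) ^ Suc k * (ln c - ln (1 - b)) ^ Suc r) / real (Suc k)
      + real (Suc r) / real (Suc k) * log_power_antideriv c k r b) \<longlongrightarrow> - 0 / real (Suc k) + real (Suc r) / real (Suc k) * 0) (at_left 1)"
    by (intro tendsto_intros Suc) (simp_all add: mult_ac)
  then show ?case
    by (simp add: fun_eq_iff)
qed

lemma nn_integral_log_ratio_power:
  assumes "a < 1"
  shows "(\<integral>\<^sup>+b. ennreal (ln ((1 - a) / (1 - b)) ^ r * (1 - b) ^ k) * indicator {a<..<1} b \<partial>lborel)
       = ennreal (fact r * (1 - a) ^ Suc k / real (Suc k) ^ Suc r)"
proof -
  define c where "c = 1 - a"
  have "0 < c"
    using assms by (simp add: c_def)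
  let ?g = "\<lambda>b. (ln c - ln (1 - b)) ^ r * (1 - b) ^ k"
  have "(\<integral>\<^sup>+b. ennreal (ln ((1 - a) / (1 - b)) ^ r * (1 - b) ^ k) * indicator {a<..<1} b \<partial>lborel)
      = (\<integral>\<^sup>+b. ennreal (?g b) * indicator {a<..<1} b \<partial>lborel)"
    using \<open>0 < c\<close> by (intro nn_integral_cong) (auto simp: c_def ln_div split: split_indicator)
  also have "\<dots> = ennreal (0 - log_power_antideriv c k r a)"
  proof (rule nn_integral_FTC_Ioo)
    show "DERIV (log_power_antideriv c k r) x :> ?g x" if "x < 1" for x
      using that by (rule log_power_antideriv_DERIV)
    show "isCont ?g x" if "x < 1" for x
      using that by (auto intro!: continuous_intros)
    show "0 \<le> ?g x" if "a < x" "x < 1" for x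
      using that by (simp add: c_def)
    have "isCont (log_power_antideriv c k r) a"
      by (rule DERIV_isCont[OF log_power_antideriv_DERIV[OF assms]])
    then show "(log_power_antideriv c k r \<longlongrightarrow> log_power_antideriv c k r a) (at_right a)"
      by (simp add: isCont_def filterlim_at_split)
  qed (use assms log_power_antideriv_tendsto_0[OF \<open>0 < c\<close>] in auto)
  also have "0 - log_power_antideriv c k r a = fact r * (1 - a) ^ Suc k / real (Suc k) ^ Suc r"
    using log_power_antideriv_at[of a k r] by (simp add: c_def)
  finally show ?thesis .
qed

section \<open>The generating function of the integrals\<close>

definition log_ratio :: "real \<times> real \<Rightarrow> real" where
  "log_ratio t = ln ((1 - fst t) / (1 - snd t))"

definition log_balance :: "real \<times> real \<Rightarrow> real" where
  "log_balance t = ln (1 / (1 - fst t)) - ln (snd t / fst t)"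

definition integrand_denom :: "real \<times> real \<Rightarrow> real" where
  "integrand_denom t = (1 - fst t) * snd t"

lemma integrand3p2_eq: "integrand3p2 r n t = log_ratio t ^ r * log_balance t ^ n / integrand_denom t"
  by (cases t) (simp add: integrand3p2_def log_ratio_def log_balance_def integrand_denom_def)

lemma log_ratio_nonneg: "t \<in> E2 \<Longrightarrow> 0 \<le> log_ratio t"
  by (cases t) (auto simp: E2_def log_ratio_def field_simps)

lemma integrand_denom_pos: "t \<in> E2 \<Longrightarrow> 0 < integrand_denom t"
  by (cases t) (auto simp: E2_def integrand_denom_def)

lemma open_E2: "open E2"
proof -
  have E2_eq: "E2 = {t. 0 < fst t} \<inter> {t. fst t < snd t} \<inter> {t. snd t < (1::real)}"
    by (auto simp: E2_def)
  show ?thesis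
    unfolding E2_eq by (intro open_Int open_Collect_less continuous_intros)
qed

lemma E2_sets [measurable]: "E2 \<in> sets lborel"
  using borel_open[OF open_E2] by simp

lemma integrand3p2_measurable [measurable]: "integrand3p2 r n \<in> borel_measurable lborel"
proof -
  have "(\<lambda>t. log_ratio t ^ r * log_balance t ^ n / integrand_denom t) \<in> borel_measurable (lborel \<Otimes>\<^sub>M lborel)"
    unfolding log_ratio_def log_balance_def integrand_denom_def by measurable
  then show ?thesis
    by (simp only: lborel_prod integrand3p2_eq[abs_def])
qed

definition integrand_egf :: "nat \<Rightarrow> real \<Rightarrow> real \<times> real \<Rightarrow> real" where
  "integrand_egf r y t = log_ratio t ^ r * exp (y * log_balance t) / integrand_denom t"

lemma integrand_egf_nonneg: "t \<in> E2 \<Longrightarrow> 0 \<le> integrand_egf r y t"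
  by (simp add: integrand_egf_def log_ratio_nonneg integrand_denom_pos less_imp_le)

lemma integrand_egf_measurable [measurable]: "integrand_egf r y \<in> borel_measurable lborel"
proof -
  have "integrand_egf r y \<in> borel_measurable (lborel \<Otimes>\<^sub>M lborel)"
    unfolding integrand_egf_def[abs_def] log_ratio_def log_balance_def integrand_denom_def by measurable
  then show ?thesis
    by (simp only: lborel_prod)
qed

lemma integrand_egf_powr:
  assumes "(a, b) \<in> E2"
  shows "integrand_egf r y (a, b) = ln ((1 - a) / (1 - b)) ^ r * (a powr y * (1 - a) powr (- y - 1)) * b powr (- y - 1)"
proof -
  have "0 < a" "0 < 1 - a" "0 < b"
    using assms by (auto simp: E2_def)
  then have "exp (y * log_balance (a, b)) / integrand_denom (a, b) = exp (y * ln a + (- y - 1) * ln (1 - a) + (- y - 1) * ln b)"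
    by (simp add: log_balance_def integrand_denom_def ln_div exp_add exp_diff exp_minus field_simps)
  also have "\<dots> = a powr y * (1 - a) powr (- y - 1) * b powr (- y - 1)"
    using \<open>0 < a\<close> \<open>0 < 1 - a\<close> \<open>0 < b\<close> by (simp add: powr_def exp_add)
  finally have "exp (y * log_balance (a, b)) / integrand_denom (a, b) = a powr y * (1 - a) powr (- y - 1) * b powr (- y - 1)" .
  then show ?thesis
    unfolding integrand_egf_def times_divide_eq_right[symmetric] by (simp add: log_ratio_def mult.assoc)
qed

lemma pochhammer_Beta_eq_gamma_ratio:
  assumes "\<bar>y\<bar> < 1"
  shows "pochhammer (y + 1) k / fact k * Beta (y + 1) (real k + 1 - y) = gamma_ratio k y / real (Suc k)"
proof -
  have "y + 1 \<notin> \<int>\<^sub>\<le>\<^sub>0"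
    using assms by (auto elim!: nonpos_Ints_cases)
  then have "pochhammer (y + 1) k = Gamma (real (Suc k) + y) / Gamma (y + 1)"
    by (simp add: pochhammer_Gamma add_ac)
  moreover have "Gamma (1 + real (Suc k)) = real (Suc k) * fact k"
    by (simp only: Gamma_fact fact_Suc)
  then have "Beta (y + 1) (real k + 1 - y) = Gamma (y + 1) * Gamma (real (Suc k) - y) / (real (Suc k) * fact k)"
    by (simp add: Beta_def add_ac)
  moreover have "Gamma (y + 1) \<noteq> 0"
    using assms by (intro Gamma_real_pos[THEN less_imp_neq, symmetric]) simp
  ultimately show ?thesis
    by (simp add: gamma_ratio_def power2_eq_square)
qed

lemma integrand_egf_binomial_sums:
  assumes "(a, b) \<in> E2"
  shows "(\<lambda>k. (pochhammer (y + 1) k / fact k * (a powr y * (1 - a) powr (- y - 1)))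
      * (ln ((1 - a) / (1 - b)) ^ r * (1 - b) ^ k)) sums integrand_egf r y (a, b)"
proof -
  have "(\<lambda>k. pochhammer (y + 1) k / fact k * (1 - b) ^ k) sums b powr (- (y + 1))"
    by (rule powr_minus_sums_pochhammer) (use assms in \<open>auto simp: E2_def\<close>)
  from sums_mult[OF this, of "ln ((1 - a) / (1 - b)) ^ r * (a powr y * (1 - a) powr (- y - 1))"]
  show ?thesis
    by (simp add: integrand_egf_powr[OF assms] mult_ac)
qed

lemma ennreal_integrand_egf_expansion:
  assumes "\<bar>y\<bar> < 1" and "0 < a"
  shows "ennreal (indicator E2 (a, b) * integrand_egf r y (a, b)) =
    (\<Sum>k. ennreal (pochhammer (y + 1) k / fact k * (a powr y * (1 - a) powr (- y - 1)))
      * (ennreal (ln ((1 - a) / (1 - b)) ^ r * (1 - b) ^ k) * indicator {a<..<1} b))"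
proof (cases "a < b \<and> b < 1")
  case True
  define \<alpha> where "\<alpha> k = pochhammer (y + 1) k / fact k * (a powr y * (1 - a) powr (- y - 1))" for k
  have \<alpha>: "0 \<le> \<alpha> k" for k
    using assms by (simp add: \<alpha>_def pochhammer_nonneg)
  have E: "(a, b) \<in> E2" and L: "0 \<le> ln ((1 - a) / (1 - b))"
    using True assms by (auto simp: E2_def)
  have "(\<Sum>k. ennreal (\<alpha> k * (ln ((1 - a) / (1 - b)) ^ r * (1 - b) ^ k))) = ennreal (integrand_egf r y (a, b))"
  proof (rule suminf_ennreal_eq)
    show "0 \<le> \<alpha> k * (ln ((1 - a) / (1 - b)) ^ r * (1 - b) ^ k)" for k
      using \<alpha>[of k] L True by simp
    show "(\<lambda>k. \<alpha> k * (ln ((1 - a) / (1 - b)) ^ r * (1 - b) ^ k)) sums integrand_egf r y (a, b)"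
      unfolding \<alpha>_def by (rule integrand_egf_binomial_sums[OF E])
  qed
  then show ?thesis
    unfolding \<alpha>_def[symmetric] using E \<alpha> L True by (simp add: ennreal_mult)
qed (auto simp: E2_def)

lemma powr_minus_mult_power_Suc:
  assumes "0 < x"
  shows "x powr (- y - 1) * x ^ Suc k = x powr (real k - y)"
proof -
  have "x ^ Suc k = x powr real (Suc k)"
    using assms by (simp only: powr_realpow)
  then have "x powr (- y - 1) * x ^ Suc k = x powr (- y - 1 + real (Suc k))"
    by (simp only: powr_add)
  also have "- y - 1 + real (Suc k) = real k - y"
    by simp
  finally show ?thesis .
qed

lemma nn_integral_integrand_egf_slice:
  assumes "\<bar>y\<bar> < 1"
  shows "(\<integral>\<^sup>+b. ennreal (indicator E2 (a, b) * integrand_egf r y (a, b)) \<partial>lborel) =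
    (\<Sum>k. ennreal (pochhammer (y + 1) k / fact k * fact r / real (Suc k) ^ Suc r
      * (indicator {0<..<1} a * (a powr y * (1 - a) powr (real k - y)))))"
proof (cases "0 < a \<and> a < 1")
  case False
  then have "indicator E2 (a, b) = (0::real)" for b
    by (auto simp: E2_def)
  moreover have "indicator {0<..<1} a = (0::real)"
    using False by auto
  ultimately show ?thesis
    by simp
next
  case True
  define \<alpha> where "\<alpha> k = pochhammer (y + 1) k / fact k * (a powr y * (1 - a) powr (- y - 1))" for k
  have \<alpha>: "0 \<le> \<alpha> k" for k
    using assms by (simp add: \<alpha>_def pochhammer_nonneg)
  let ?L = "\<lambda>k b. ennreal (ln ((1 - a) / (1 - b)) ^ r * (1 - b) ^ k) * indicator {a<..<1} b"
  have "(\<integral>\<^sup>+b. ennreal (indicator E2 (a, b) * integrand_egf r y (a, b)) \<partial>lborel)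
      = (\<integral>\<^sup>+b. (\<Sum>k. ennreal (\<alpha> k) * ?L k b) \<partial>lborel)"
    using True by (simp add: ennreal_integrand_egf_expansion[OF assms] \<alpha>_def)
  also have "\<dots> = (\<Sum>k. \<integral>\<^sup>+b. ennreal (\<alpha> k) * ?L k b \<partial>lborel)"
    by (rule nn_integral_suminf) simp
  also have "\<dots> = (\<Sum>k. ennreal (\<alpha> k) * ennreal (fact r * (1 - a) ^ Suc k / real (Suc k) ^ Suc r))"
    using True by (simp add: nn_integral_cmult nn_integral_log_ratio_power)
  also have "\<dots> = (\<Sum>k. ennreal (pochhammer (y + 1) k / fact k * fact r / real (Suc k) ^ Suc r
      * (indicator {0<..<1} a * (a powr y * (1 - a) powr (real k - y)))))"
    using True \<alpha> powr_minus_mult_power_Suc[of "1 - a" y]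
    by (intro suminf_cong) (simp add: ennreal_mult[symmetric] \<alpha>_def mult_ac)
  finally show ?thesis .
qed

lemma nn_integral_integrand_egf:
  assumes y: "\<bar>y\<bar> < 1"
  shows "(\<integral>\<^sup>+t. ennreal (indicator E2 t * integrand_egf r y t) \<partial>lborel) = ennreal (fact r * zeta_star_gf r y)"
proof -
  define c where "c k = pochhammer (y + 1) k / fact k * fact r / real (Suc k) ^ Suc r" for k
  have c: "0 \<le> c k" for k
    using y by (simp add: c_def pochhammer_nonneg)
  let ?B = "\<lambda>k a. ennreal (indicator {0<..<1} a * (a powr y * (1 - a) powr (real k - y)))"
  have "(\<integral>\<^sup>+t. ennreal (indicator E2 t * integrand_egf r y t) \<partial>lborel)
      = (\<integral>\<^sup>+t. ennreal (indicator E2 t * integrand_egf r y t) \<partial>(lborel \<Otimes>\<^sub>M lborel))"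
    by (simp only: lborel_prod)
  also have "\<dots> = (\<integral>\<^sup>+a. \<integral>\<^sup>+b. ennreal (indicator E2 (a, b) * integrand_egf r y (a, b)) \<partial>lborel \<partial>lborel)"
    by (rule lborel.nn_integral_fst[symmetric]) (unfold lborel_prod, measurable)
  also have "\<dots> = (\<integral>\<^sup>+a. (\<Sum>k. ennreal (c k) * ?B k a) \<partial>lborel)"
    unfolding nn_integral_integrand_egf_slice[OF y]
    by (intro nn_integral_cong suminf_cong) (unfold c_def, rule ennreal_mult'[OF c[of _, unfolded c_def]])
  also have "\<dots> = (\<Sum>k. \<integral>\<^sup>+a. ennreal (c k) * ?B k a \<partial>lborel)"
    by (rule nn_integral_suminf) measurable
  also have "\<dots> = (\<Sum>k. ennreal (c k) * ennreal (Beta (y + 1) (real k + 1 - y)))"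
    using y nn_integral_Beta[of "y + 1" "real k + 1 - y" for k] by (simp add: nn_integral_cmult)
  also have "\<dots> = (\<Sum>k. ennreal (fact r * (gamma_ratio k y / real (Suc k) ^ (r + 2))))"
  proof (rule suminf_cong)
    fix k
    have "c k * Beta (y + 1) (real k + 1 - y) = fact r / real (Suc k) ^ Suc r * (gamma_ratio k y / real (Suc k))"
      unfolding pochhammer_Beta_eq_gamma_ratio[OF y, symmetric] by (simp add: c_def mult_ac)
    also have "\<dots> = fact r * (gamma_ratio k y / real (Suc k) ^ (r + 2))"
      by (simp add: field_simps)
    finally show "ennreal (c k) * ennreal (Beta (y + 1) (real k + 1 - y))
        = ennreal (fact r * (gamma_ratio k y / real (Suc k) ^ (r + 2)))"
      using c by (simp flip: ennreal_mult')
  qed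
  also have "\<dots> = ennreal (fact r * zeta_star_gf r y)"
    unfolding zeta_star_gf_def
    by (intro suminf_ennreal_eq sums_mult summable_sums summable_zeta_star_gf y)
       (simp add: gamma_ratio_pos less_imp_le y)
  finally show ?thesis .
qed

lemma integrable_integrand_egf:
  assumes "\<bar>y\<bar> < 1"
  shows "set_integrable lborel E2 (integrand_egf r y)"
    and "(LINT t:E2|lborel. integrand_egf r y t) = fact r * zeta_star_gf r y"
proof -
  have "integrable lborel (\<lambda>t. indicator E2 t * integrand_egf r y t)
      \<and> (\<integral>t. indicator E2 t * integrand_egf r y t \<partial>lborel) = fact r * zeta_star_gf r y"
    using nn_integral_integrand_egf[OF assms] zeta_star_gf_nonneg[OF assms]
    by (intro nn_integral_eq_integrable[THEN iffD1]) (auto simp: integrand_egf_nonneg split: split_indicator)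
  then show "set_integrable lborel E2 (integrand_egf r y)"
    and "(LINT t:E2|lborel. integrand_egf r y t) = fact r * zeta_star_gf r y"
    by (simp_all add: set_integrable_def set_lebesgue_integral_def)
qed

lemma integrand_egf_sums:
  assumes "t \<in> E2"
  shows "(\<lambda>n. y ^ n / fact n * integrand3p2 r n t) sums integrand_egf r y t"
proof -
  have "(\<lambda>n. (y * log_balance t) ^ n /\<^sub>R fact n) sums exp (y * log_balance t)"
    by (rule exp_converges)
  from sums_mult[OF this, of "log_ratio t ^ r / integrand_denom t"] show ?thesis
    by (simp add: integrand3p2_eq integrand_egf_def power_mult_distrib divide_inverse mult_ac)
qed

lemma abs_integrand_series_le:
  assumes "t \<in> E2"
  shows "summable (\<lambda>n. \<bar>y ^ n / fact n * integrand3p2 r n t\<bar>)"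
    and "(\<Sum>n. \<bar>y ^ n / fact n * integrand3p2 r n t\<bar>) \<le> integrand_egf r y t + integrand_egf r (- y) t"
proof -
  let ?x = "\<bar>y * log_balance t\<bar>"
  have "(\<lambda>n. ?x ^ n /\<^sub>R fact n) sums exp ?x"
    by (rule exp_converges)
  from sums_mult[OF this, of "log_ratio t ^ r / integrand_denom t"]
  have "(\<lambda>n. \<bar>y ^ n / fact n * integrand3p2 r n t\<bar>) sums (log_ratio t ^ r / integrand_denom t * exp ?x)"
    using log_ratio_nonneg[OF assms] integrand_denom_pos[OF assms]
    by (simp add: integrand3p2_eq abs_mult power_abs power_mult_distrib divide_inverse mult_ac)
  then show "summable (\<lambda>n. \<bar>y ^ n / fact n * integrand3p2 r n t\<bar>)"
    and "(\<Sum>n. \<bar>y ^ n / fact n * integrand3p2 r n t\<bar>) \<le> integrand_egf r y t + integrand_egf r (- y) t"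
    using log_ratio_nonneg[OF assms] integrand_denom_pos[OF assms]
    by (auto simp: sums_iff integrand_egf_def abs_if add_divide_distrib distrib_left[symmetric]
        intro!: mult_left_mono divide_right_mono)
qed

lemma set_integrable_integrand3p2: "set_integrable lborel E2 (integrand3p2 r n)"
proof -
  let ?h = "\<lambda>t. 2 ^ n * fact n * (indicator E2 t * integrand_egf r (1 / 2) t + indicator E2 t * integrand_egf r (- (1 / 2)) t)"
  have h_int: "integrable lborel ?h"
    using integrable_integrand_egf(1)[of "1 / 2" r] integrable_integrand_egf(1)[of "- (1 / 2)" r]
    by (intro integrable_mult_right Bochner_Integration.integrable_add) (simp_all add: set_integrable_def)
  have bound: "norm (indicator E2 t *\<^sub>R integrand3p2 r n t) \<le> norm (?h t)" for t
  proof (cases "t \<in> E2")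
    case True
    note series = abs_integrand_series_le[OF True, of "1 / 2" r]
    have "\<bar>(1 / 2) ^ n / fact n * integrand3p2 r n t\<bar> \<le> (\<Sum>m. \<bar>(1 / 2) ^ m / fact m * integrand3p2 r m t\<bar>)"
      using sum_le_suminf[OF series(1), of "{n}"] by simp
    also have "\<dots> \<le> integrand_egf r (1 / 2) t + integrand_egf r (- (1 / 2)) t"
      by (rule series(2))
    finally have "\<bar>integrand3p2 r n t\<bar> \<le> 2 ^ n * fact n * (integrand_egf r (1 / 2) t + integrand_egf r (- (1 / 2)) t)"
      by (simp add: abs_mult power_divide field_simps)
    then show ?thesis
      using True integrand_egf_nonneg[OF True] by simp
  qed simp
  show ?thesis
    unfolding set_integrable_def by (rule Bochner_Integration.integrable_bound[OF h_int _ AE_I2[OF bound]]) measurable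
qed

lemma integrand3p2_series:
  assumes y: "\<bar>y\<bar> < 1"
  shows "(\<lambda>n. y ^ n / fact n * (LINT t:E2|lborel. integrand3p2 r n t)) sums (fact r * zeta_star_gf r y)"
proof -
  define u where "u n t = y ^ n / fact n * (indicator E2 t * integrand3p2 r n t)" for n t
  have u: "integrable lborel (u n)" for n
    using set_integrable_integrand3p2[of r n] unfolding u_def set_integrable_def
    by (intro integrable_mult_right) simp
  have abs_u: "summable (\<lambda>n. norm (u n t))"
    and bound_u: "(\<Sum>n. norm (u n t)) \<le> indicator E2 t * (integrand_egf r y t + integrand_egf r (- y) t)" for t
    using abs_integrand_series_le[of t y r] by (cases "t \<in> E2"; simp add: u_def)+
  have lim: "(\<lambda>n. integral\<^sup>L lborel (u n)) sums (\<integral>t. (\<Sum>n. u n t) \<partial>lborel)"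
  proof (rule sums_integral[OF u AE_I2[OF abs_u]])
    show "summable (\<lambda>n. \<integral>t. norm (u n t) \<partial>lborel)"
      using integrable_integrand_egf(1)[OF y, of r] integrable_integrand_egf(1)[of "- y" r] y
      by (intro summable_integral_norm_dominated[OF u _ abs_u bound_u])
         (auto simp: set_integrable_def distrib_left intro!: Bochner_Integration.integrable_add)
  qed
  have "integral\<^sup>L lborel (u n) = y ^ n / fact n * (LINT t:E2|lborel. integrand3p2 r n t)" for n
    by (simp add: u_def[abs_def] set_lebesgue_integral_def)
  moreover have "(\<Sum>n. u n t) = indicator E2 t * integrand_egf r y t" for t
    using integrand_egf_sums[of t y r] by (cases "t \<in> E2") (simp_all add: u_def sums_iff)
  moreover have "(\<integral>t. indicator E2 t * integrand_egf r y t \<partial>lborel) = fact r * zeta_star_gf r y"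
    using integrable_integrand_egf(2)[OF y, of r] by (simp add: set_lebesgue_integral_def)
  ultimately show ?thesis
    using lim by simp
qed

theorem theorem3p2:
  fixes r n :: nat
  shows "set_integrable lborel E2 (integrand3p2 r n) \<and>
         (1 / (fact r * fact n)) * (\<integral>t\<in>E2. integrand3p2 r n t \<partial>lborel) =
           (if even n then zeta_star ((r + 2) # replicate (n div 2) 2) else 0)"
proof
  show "set_integrable lborel E2 (integrand3p2 r n)"
    by (rule set_integrable_integrand3p2)
  have lhs_sums: "(\<lambda>m. (1 / (fact r * fact m)) * (\<integral>t\<in>E2. integrand3p2 r m t \<partial>lborel) * y ^ m) sums zeta_star_gf r y"
    if "norm y < 1 / 2" for y :: real
    using sums_divide[OF integrand3p2_series[of y r], of "fact r"] that by (simp add: field_simps)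
  have rhs_sums: "(\<lambda>m. (if even m then zeta_star ((r + 2) # replicate (m div 2) 2) else 0) * y ^ m) sums zeta_star_gf r y"
    if "norm y < 1 / 2" for y :: real
    using that by (simp add: zeta_star_gf_powser)
  show "(1 / (fact r * fact n)) * (\<integral>t\<in>E2. integrand3p2 r n t \<partial>lborel) =
      (if even n then zeta_star ((r + 2) # replicate (n div 2) 2) else 0)"
    by (rule powser_coeff_unique[where \<delta> = "1 / 2", OF _ lhs_sums rhs_sums]) simp_all
qed

end
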